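(* Fix simple objects $j,k$ of $\mathcal{C}$. For each simple $i$ with $(i,j,k)$ admissible and each admissible $(a,i,b)$, put $$u^{ab}_i=\sum_pF^{ajk}_{b;ip}\;v^{ap}_j\otimes v^{pb}_k\ \in V_j\otimes V_k .$$ Then the subspace of $V_j\otimes V_k$ spanned by the $u^{ab}_i$ (for fixed $i$) is an $H_\mathcal{C}$-submodule isomorphic to $V_i$ via $v^{ab}_i\mapsto u^{ab}_i$, and $$V_j\otimes V_k\cong\bigoplus_{i:\,(i,j,k)\text{ admissible}}V_i .$$
   Context: $\mathcal{C}$ is a unitary fusion category, multiplicity free, whose simple objects are self-dual with trivial Frobenius–Schur indicators; $d_a$ quantum dimensions; $(a,b,c)$ admissible iff $\mathrm{Hom}(a\otimes b,c)\ne0$. Trivalent vertices are normalized so $\theta(a,b,c)=\sqrt{d_ad_bd_c}$; $F^{abc}_{d;nm}$ are the (unitary) $F$-symbols: the basis vector of $\mathrm{Hom}((a\otimes b)\otimes c,d)$ with intermediate $m$ equals $\sum_nF^{abc}_{d;nm}$ times that of $\mathrm{Hom}(a\otimes(b\otimes c),d)$ with intermediate $n$. $H_\mathcal{C}$ has basis $e^{ab}_{i;cd}$ ($(a,i,b)$, $(i,d,c)$ admissible), multiplication $e^{ab}_{i;cd}e^{a'b'}_{i';c'd'}=\frac{\delta_{c,a'}\delta_{d,b'}\delta_{i,i'}}{\sqrt{d_i}}e^{ab}_{i;c'd'}$, unit $\eta=\sum_{a,b,i}\sqrt{d_i}e^{ab}_{i;ab}$ and comultiplication $\Delta(e^{ab}_{i;cd})=\sum_{j,k,p,q}\frac{\sqrt{d_jd_k}}{\sqrt{d_i}}F^{ajk}_{b;ip}F^{dkj}_{c;iq}e^{ap}_{j;cq}\otimes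 e^{pb}_{k;qd}$ (sum over $j,k$ admissible with $i$). $V_i$ is the $H_\mathcal{C}$-module with basis $v^{ab}_i$ ($(a,i,b)$ admissible) and $e^{ab}_{l;cd}\cdot v^{pq}_i=\frac{\delta_{i,l}\delta_{c,p}\delta_{d,q}}{\sqrt{d_i}}v^{ab}_i$. The tensor product of $H_\mathcal{C}$-modules is $U\otimes V=\Delta(\eta)\cdot(U\otimes_\mathbb{C}V)$ with $H_\mathcal{C}$ acting through $\Delta$. *)

theory Defs
  imports Complex_Main
begin

text \<open>
Skeletal data of a multiplicity-free unitary fusion category whose simple objects are
self-dual with trivial Frobenius--Schur indicators, in the gauge where trivalent vertices
are normalized by theta(a,b,c) = sqrt(d_a d_b d_c).
  L      : the (finite) set of simple objects (labels), u the unit object;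
  d      : quantum dimensions;
  adm a b c : (a,b,c) admissible, i.e. Hom(a (x) b, c) nonzero;
  F a b c e n m  =  F^{abc}_{e;nm}, where n is the intermediate of b (x) c and m that of a (x) b;
                    it is 0 whenever the labels are not admissible.
\<close>

type_synonym 'l hidx = "'l \<times> 'l \<times> 'l \<times> 'l \<times> 'l"

definition ufc_data ::
  "'l set \<Rightarrow> 'l \<Rightarrow> ('l \<Rightarrow> real) \<Rightarrow> ('l \<Rightarrow> 'l \<Rightarrow> 'l \<Rightarrow> bool)
   \<Rightarrow> ('l \<Rightarrow> 'l \<Rightarrow> 'l \<Rightarrow> 'l \<Rightarrow> 'l \<Rightarrow> 'l \<Rightarrow> complex) \<Rightarrow> bool" where
"ufc_data L u d adm F \<longleftrightarrow>
   finite L \<and> u \<in> L \<and>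
   (\<forall>a b c. adm a b c \<longrightarrow> a \<in> L \<and> b \<in> L \<and> c \<in> L) \<and>
   (\<forall>a b c. adm a b c \<longrightarrow> adm b a c \<and> adm a c b) \<and>
   (\<forall>a\<in>L. \<forall>b\<in>L. adm u a b \<longleftrightarrow> a = b) \<and>
   (\<forall>a\<in>L. d a > 0) \<and> d u = 1 \<and>
   (\<forall>a\<in>L. \<forall>b\<in>L. d a * d b = (\<Sum>c\<in>{c\<in>L. adm a b c}. d c)) \<and>
   (\<forall>a b c e n m. F a b c e n m \<noteq> 0 \<longrightarrow>
        adm b c n \<and> adm a n e \<and> adm a b m \<and> adm m c e) \<and>
   (\<forall>a\<in>L. \<forall>b\<in>L. \<forall>c\<in>L. \<forall>e\<in>L. \<forall>m\<in>L. \<forall>m'\<in>L.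
        adm a b m \<and> adm m c e \<and> adm a b m' \<and> adm m' c e \<longrightarrow>
        (\<Sum>n\<in>L. cnj (F a b c e n m) * F a b c e n m') = (if m = m' then 1 else 0)) \<and>
   (\<forall>a\<in>L. \<forall>b\<in>L. \<forall>c\<in>L. \<forall>e\<in>L. \<forall>n\<in>L. \<forall>n'\<in>L.
        adm b c n \<and> adm a n e \<and> adm b c n' \<and> adm a n' e \<longrightarrow>
        (\<Sum>m\<in>L. F a b c e n m * cnj (F a b c e n' m)) = (if n = n' then 1 else 0)) \<and>
   (\<forall>a\<in>L. \<forall>b\<in>L. \<forall>c\<in>L. \<forall>x\<in>L. \<forall>e\<in>L. \<forall>p\<in>L. \<forall>q\<in>L. \<forall>r\<in>L. \<forall>s\<in>L.
        F p c x e r q * F a b r e s p =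
        (\<Sum>t\<in>L. F a b c q t p * F a t x e s q * F b c x s r t)) \<and>
   (\<forall>a\<in>L. \<forall>b\<in>L. \<forall>c\<in>L. adm a b c \<longrightarrow>
        F u a b c c a = 1 \<and> F a u b c b a = 1 \<and> F a b u c b c = 1) \<and>
   (\<forall>a\<in>L. \<forall>b\<in>L. \<forall>c\<in>L. \<forall>e\<in>L. \<forall>n\<in>L. \<forall>m\<in>L.
        F e c b a n m = cnj (F a b c e n m) \<and>
        F b a e c n m = cnj (F a b c e n m) \<and>
        F a m c n e b * complex_of_real (sqrt (d n * d m))
          = cnj (F a b c e n m) * complex_of_real (sqrt (d e * d b)))"

text \<open>Indices (a,b) of the basis vectors v^{ab}_i of V_i, and the carrier of V_i
(coefficient vectors).\<close>
definition Vidx :: "'l set \<Rightarrow> ('l \<Rightarrow> 'l \<Rightarrow> 'l \<Rightarrow> bool) \<Rightarrow> 'l \<Rightarrow> ('l \<times> 'l) set" where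
"Vidx L adm i = {(a,b). a \<in> L \<and> b \<in> L \<and> adm a i b}"

definition Vmod :: "'l set \<Rightarrow> ('l \<Rightarrow> 'l \<Rightarrow> 'l \<Rightarrow> bool) \<Rightarrow> 'l \<Rightarrow> ('l \<times> 'l \<Rightarrow> complex) set" where
"Vmod L adm i = {x. \<forall>z. x z \<noteq> 0 \<longrightarrow> z \<in> Vidx L adm i}"

text \<open>Indices (a,b,i,c,e) of the basis elements e^{ab}_{i;ce} of H_C; an element of H_C
is a coefficient function on these indices.\<close>
definition Hidx :: "'l set \<Rightarrow> ('l \<Rightarrow> 'l \<Rightarrow> 'l \<Rightarrow> bool) \<Rightarrow> 'l hidx set" where
"Hidx L adm = {(a,b,i,c,e). a \<in> L \<and> b \<in> L \<and> i \<in> L \<and> c \<in> L \<and> e \<in> L \<and> adm a i b \<and> adm i e c}"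

text \<open>Matrix coefficient: the coefficient of v^{alpha}_i in e_iota . v^{gamma}_i.\<close>
definition rep :: "('l \<Rightarrow> real) \<Rightarrow> 'l \<Rightarrow> 'l hidx \<Rightarrow> 'l \<times> 'l \<Rightarrow> 'l \<times> 'l \<Rightarrow> complex" where
"rep d i \<iota> \<alpha> \<gamma> = (case \<iota> of (a,b,l,c,e) \<Rightarrow>
    if l = i \<and> \<alpha> = (a,b) \<and> \<gamma> = (c,e) then 1 / complex_of_real (sqrt (d i)) else 0)"

definition actV :: "'l set \<Rightarrow> ('l \<Rightarrow> real) \<Rightarrow> ('l \<Rightarrow> 'l \<Rightarrow> 'l \<Rightarrow> bool) \<Rightarrow> 'l
    \<Rightarrow> ('l hidx \<Rightarrow> complex) \<Rightarrow> ('l \<times> 'l \<Rightarrow> complex) \<Rightarrow> ('l \<times> 'l \<Rightarrow> complex)" where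
"actV L d adm i h x = (\<lambda>\<alpha>. \<Sum>\<iota>\<in>Hidx L adm. \<Sum>\<gamma>\<in>Vidx L adm i. h \<iota> * rep d i \<iota> \<alpha> \<gamma> * x \<gamma>)"

definition eta :: "'l set \<Rightarrow> ('l \<Rightarrow> real) \<Rightarrow> ('l \<Rightarrow> 'l \<Rightarrow> 'l \<Rightarrow> bool) \<Rightarrow> 'l hidx \<Rightarrow> complex" where
"eta L d adm = (\<lambda>(a,b,i,c,e). if (a,b,i,c,e) \<in> Hidx L adm \<and> c = a \<and> e = b
                              then complex_of_real (sqrt (d i)) else 0)"

text \<open>Comultiplication of a basis element, as an element of H_C (x) H_C
(coefficient function on pairs of basis indices).\<close>
definition Delta_basis :: "'l set \<Rightarrow> ('l \<Rightarrow> real) \<Rightarrow> ('l \<Rightarrow> 'l \<Rightarrow> 'l \<Rightarrow> bool)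
    \<Rightarrow> ('l \<Rightarrow> 'l \<Rightarrow> 'l \<Rightarrow> 'l \<Rightarrow> 'l \<Rightarrow> 'l \<Rightarrow> complex) \<Rightarrow> 'l hidx \<Rightarrow> ('l hidx \<times> 'l hidx \<Rightarrow> complex)" where
"Delta_basis L d adm F \<iota> XY =
   (case \<iota> of (a,b,i,c,e) \<Rightarrow>
    (case XY of ((a1,p1,j,c1,q1),(p2,b2,k,q2,e2)) \<Rightarrow>
      if a1 = a \<and> c1 = c \<and> b2 = b \<and> e2 = e \<and> p1 = p2 \<and> q1 = q2 \<and> j \<in> L \<and> k \<in> L \<and> adm i j k
      then complex_of_real (sqrt (d j * d k) / sqrt (d i)) * F a j k b i p1 * F e k j c i q1
      else 0))"

definition Delta :: "'l set \<Rightarrow> ('l \<Rightarrow> real) \<Rightarrow> ('l \<Rightarrow> 'l \<Rightarrow> 'l \<Rightarrow> bool)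
    \<Rightarrow> ('l \<Rightarrow> 'l \<Rightarrow> 'l \<Rightarrow> 'l \<Rightarrow> 'l \<Rightarrow> 'l \<Rightarrow> complex) \<Rightarrow> ('l hidx \<Rightarrow> complex) \<Rightarrow> ('l hidx \<times> 'l hidx \<Rightarrow> complex)" where
"Delta L d adm F h = (\<lambda>XY. \<Sum>\<iota>\<in>Hidx L adm. h \<iota> * Delta_basis L d adm F \<iota> XY)"

text \<open>V_j (x)_C V_k as coefficient functions on pairs of basis indices, and the action
of H_C (x) H_C on it.\<close>
definition TCmod :: "'l set \<Rightarrow> ('l \<Rightarrow> 'l \<Rightarrow> 'l \<Rightarrow> bool) \<Rightarrow> 'l \<Rightarrow> 'l
    \<Rightarrow> (('l \<times> 'l) \<times> ('l \<times> 'l) \<Rightarrow> complex) set" where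
"TCmod L adm j k = {t. \<forall>z. t z \<noteq> 0 \<longrightarrow> z \<in> Vidx L adm j \<times> Vidx L adm k}"

definition actT :: "'l set \<Rightarrow> ('l \<Rightarrow> real) \<Rightarrow> ('l \<Rightarrow> 'l \<Rightarrow> 'l \<Rightarrow> bool) \<Rightarrow> 'l \<Rightarrow> 'l
    \<Rightarrow> ('l hidx \<times> 'l hidx \<Rightarrow> complex) \<Rightarrow> (('l \<times> 'l) \<times> ('l \<times> 'l) \<Rightarrow> complex)
    \<Rightarrow> (('l \<times> 'l) \<times> ('l \<times> 'l) \<Rightarrow> complex)" where
"actT L d adm j k X t = (\<lambda>(\<alpha>,\<beta>).
    \<Sum>(\<iota>,\<kappa>)\<in>Hidx L adm \<times> Hidx L adm. \<Sum>(\<gamma>,\<delta>)\<in>Vidx L adm j \<times> Vidx L adm k.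
       X (\<iota>,\<kappa>) * rep d j \<iota> \<alpha> \<gamma> * rep d k \<kappa> \<beta> \<delta> * t (\<gamma>,\<delta>))"

text \<open>The H_C-module V_j (x) V_k = Delta(eta) . (V_j (x)_C V_k), with H_C acting through Delta.\<close>
definition tens_carrier :: "'l set \<Rightarrow> ('l \<Rightarrow> real) \<Rightarrow> ('l \<Rightarrow> 'l \<Rightarrow> 'l \<Rightarrow> bool)
    \<Rightarrow> ('l \<Rightarrow> 'l \<Rightarrow> 'l \<Rightarrow> 'l \<Rightarrow> 'l \<Rightarrow> 'l \<Rightarrow> complex) \<Rightarrow> 'l \<Rightarrow> 'l
    \<Rightarrow> (('l \<times> 'l) \<times> ('l \<times> 'l) \<Rightarrow> complex) set" where
"tens_carrier L d adm F j k = actT L d adm j k (Delta L d adm F (eta L d adm)) ` TCmod L adm j k"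

definition tens_act :: "'l set \<Rightarrow> ('l \<Rightarrow> real) \<Rightarrow> ('l \<Rightarrow> 'l \<Rightarrow> 'l \<Rightarrow> bool)
    \<Rightarrow> ('l \<Rightarrow> 'l \<Rightarrow> 'l \<Rightarrow> 'l \<Rightarrow> 'l \<Rightarrow> 'l \<Rightarrow> complex) \<Rightarrow> 'l \<Rightarrow> 'l
    \<Rightarrow> ('l hidx \<Rightarrow> complex) \<Rightarrow> (('l \<times> 'l) \<times> ('l \<times> 'l) \<Rightarrow> complex)
    \<Rightarrow> (('l \<times> 'l) \<times> ('l \<times> 'l) \<Rightarrow> complex)" where
"tens_act L d adm F j k h t = actT L d adm j k (Delta L d adm F h) t"

definition uvec :: "('l \<Rightarrow> 'l \<Rightarrow> 'l \<Rightarrow> 'l \<Rightarrow> 'l \<Rightarrow> 'l \<Rightarrow> complex) \<Rightarrow> 'l \<Rightarrow> 'l \<Rightarrow> 'l \<Rightarrow> 'l \<Rightarrow> 'l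
    \<Rightarrow> (('l \<times> 'l) \<times> ('l \<times> 'l) \<Rightarrow> complex)" where
"uvec F j k i a b = (\<lambda>((x,y),(y',z)). if x = a \<and> z = b \<and> y = y' then F a j k b i y else 0)"

definition phi :: "'l set \<Rightarrow> ('l \<Rightarrow> 'l \<Rightarrow> 'l \<Rightarrow> bool) \<Rightarrow> ('l \<Rightarrow> 'l \<Rightarrow> 'l \<Rightarrow> 'l \<Rightarrow> 'l \<Rightarrow> 'l \<Rightarrow> complex)
    \<Rightarrow> 'l \<Rightarrow> 'l \<Rightarrow> 'l \<Rightarrow> ('l \<times> 'l \<Rightarrow> complex) \<Rightarrow> (('l \<times> 'l) \<times> ('l \<times> 'l) \<Rightarrow> complex)" where
"phi L adm F j k i x = (\<lambda>z. \<Sum>(a,b)\<in>Vidx L adm i. x (a,b) * uvec F j k i a b z)"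

definition Wspan :: "'l set \<Rightarrow> ('l \<Rightarrow> 'l \<Rightarrow> 'l \<Rightarrow> bool) \<Rightarrow> ('l \<Rightarrow> 'l \<Rightarrow> 'l \<Rightarrow> 'l \<Rightarrow> 'l \<Rightarrow> 'l \<Rightarrow> complex)
    \<Rightarrow> 'l \<Rightarrow> 'l \<Rightarrow> 'l \<Rightarrow> (('l \<times> 'l) \<times> ('l \<times> 'l) \<Rightarrow> complex) set" where
"Wspan L adm F j k i =
   {(\<lambda>z. \<Sum>(a,b)\<in>Vidx L adm i. c (a,b) * uvec F j k i a b z) | c. True}"

definition dsum_carrier :: "'l set \<Rightarrow> ('l \<Rightarrow> 'l \<Rightarrow> 'l \<Rightarrow> bool) \<Rightarrow> 'l \<Rightarrow> 'l
    \<Rightarrow> ('l \<Rightarrow> 'l \<times> 'l \<Rightarrow> complex) set" where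
"dsum_carrier L adm j k =
   {f. \<forall>i. (i \<in> L \<and> adm i j k \<longrightarrow> f i \<in> Vmod L adm i) \<and>
           (\<not> (i \<in> L \<and> adm i j k) \<longrightarrow> f i = (\<lambda>_. 0))}"

definition ds_act :: "'l set \<Rightarrow> ('l \<Rightarrow> real) \<Rightarrow> ('l \<Rightarrow> 'l \<Rightarrow> 'l \<Rightarrow> bool)
    \<Rightarrow> ('l hidx \<Rightarrow> complex) \<Rightarrow> ('l \<Rightarrow> 'l \<times> 'l \<Rightarrow> complex) \<Rightarrow> ('l \<Rightarrow> 'l \<times> 'l \<Rightarrow> complex)" where
"ds_act L d adm h f = (\<lambda>i. actV L d adm i h (f i))"

end

theory Submission
  imports Defs
begin

text \<open>
  Let \<open>Psi\<close> be the sum over the channels \<open>i\<close> (those with \<open>(i,j,k)\<close> admissible) of the maps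
  \<open>v\<^sup>a\<^sup>b\<^sub>i \<mapsto> u\<^sup>a\<^sup>b\<^sub>i\<close>. The coefficient of \<open>u\<^sup>c\<^sup>e\<^sub>i\<close> is recovered by the functional
  \<open>t \<mapsto> \<Sum>\<^sub>q F\<^sup>e\<^sup>k\<^sup>j\<^sub>c\<^sub>;\<^sub>i\<^sub>q t(v\<^sup>c\<^sup>q\<^sub>j \<otimes> v\<^sup>q\<^sup>e\<^sub>k)\<close>, because \<open>F\<^sup>e\<^sup>k\<^sup>j\<^sub>c\<^sub>;\<^sub>i\<^sub>q\<close> is the conjugate of
  \<open>F\<^sup>c\<^sup>j\<^sup>k\<^sub>e\<^sub>;\<^sub>i\<^sub>q\<close> and the rows of a unitary \<open>F\<close>-matrix are orthonormal; so \<open>Psi\<close> is injective.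
  Evaluating \<open>\<Delta>(e\<^sup>a\<^sup>b\<^sub>l\<^sub>;\<^sub>c\<^sub>e)\<close> on \<open>V\<^sub>j \<otimes>\<^sub>\<complex> V\<^sub>k\<close>, its first \<open>F\<close>-factor is the coefficient of \<open>u\<^sup>a\<^sup>b\<^sub>l\<close> and its
  second one is the functional above, so the action of any \<open>h\<close> on any \<open>t\<close> equals \<open>Psi\<close> applied to
  the action of \<open>h\<close> on the coordinates of \<open>t\<close>. Hence \<open>Psi\<close> intertwines the actions, and since
  \<open>\<eta>\<close> acts trivially on each \<open>V\<^sub>i\<close>, the image of \<open>\<Delta>(\<eta>)\<close> is exactly the image of \<open>Psi\<close>.
  Restricting \<open>Psi\<close> to a single channel gives the isomorphisms onto the spans of the \<open>u\<^sup>a\<^sup>b\<^sub>i\<close>.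
\<close>

lemma sum_eq_single:
  assumes "finite A" "\<And>x. x \<in> A \<Longrightarrow> x \<noteq> w \<Longrightarrow> f x = 0"
  shows "sum f A = (if w \<in> A then f w else 0)"
proof (cases "w \<in> A")
  case True
  then have "sum f A = f w + sum f (A - {w})" using assms(1) by (simp add: sum.remove)
  also have "sum f (A - {w}) = 0" using assms(2) by (intro sum.neutral) auto
  finally show ?thesis using True by simp
next
  case False
  then show ?thesis using assms by (auto intro: sum.neutral)
qed

lemma sum_reindex_nonzero:
  assumes "finite A" "finite B" "inj_on m B"
    "\<And>z. z \<in> A \<Longrightarrow> g z \<noteq> 0 \<Longrightarrow> z \<in> m ` B"
    "\<And>q. q \<in> B \<Longrightarrow> g (m q) \<noteq> 0 \<Longrightarrow> m q \<in> A"
  shows "sum g A = (\<Sum>q\<in>B. g (m q))"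
proof -
  have "sum g A = sum g (A \<inter> m ` B)"
    using assms by (intro sum.mono_neutral_right) auto
  also have "\<dots> = sum g (m ` B)"
    using assms by (intro sum.mono_neutral_left) auto
  also have "\<dots> = (\<Sum>q\<in>B. g (m q))" using assms(3) by (simp add: sum.reindex)
  finally show ?thesis .
qed

lemma actT_Delta:
  "actT L d adm j k (Delta L d adm F h) t z =
     (\<Sum>\<iota>\<in>Hidx L adm. h \<iota> * actT L d adm j k (Delta_basis L d adm F \<iota>) t z)"
  unfolding actT_def Delta_def case_prod_unfold
  by (simp add: sum_distrib_left sum_distrib_right sum.swap[of _ "Hidx L adm"] mult_ac)

lemma Wspan_eq_range_phi: "Wspan L adm F j k i = range (phi L adm F j k i)"
  unfolding Wspan_def phi_def by auto

definition dsum_single :: "'i \<Rightarrow> ('a \<Rightarrow> 'b::zero) \<Rightarrow> 'i \<Rightarrow> 'a \<Rightarrow> 'b" where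
  "dsum_single i x = (\<lambda>i'. if i' = i then x else (\<lambda>_. 0))"

locale ufc =
  fixes L :: "'l set" and u :: 'l and d :: "'l \<Rightarrow> real"
    and adm :: "'l \<Rightarrow> 'l \<Rightarrow> 'l \<Rightarrow> bool"
    and F :: "'l \<Rightarrow> 'l \<Rightarrow> 'l \<Rightarrow> 'l \<Rightarrow> 'l \<Rightarrow> 'l \<Rightarrow> complex"
  assumes ufc_data: "ufc_data L u d adm F"
begin

abbreviation "H \<equiv> Hidx L adm"
abbreviation "V i \<equiv> Vidx L adm i"

lemma finite_labels: "finite L"
  using ufc_data unfolding ufc_data_def by (elim conjE)

lemma adm_labels: "adm a b c \<Longrightarrow> a \<in> L \<and> b \<in> L \<and> c \<in> L"
proof -
  have "\<forall>a b c. adm a b c \<longrightarrow> a \<in> L \<and> b \<in> L \<and> c \<in> L"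
    using ufc_data unfolding ufc_data_def by (elim conjE) assumption
  then show "adm a b c \<Longrightarrow> a \<in> L \<and> b \<in> L \<and> c \<in> L" by blast
qed

lemma adm_perm:
  assumes "adm a b c" shows "adm b a c" "adm a c b" "adm b c a" "adm c a b" "adm c b a"
proof -
  have "\<forall>a b c. adm a b c \<longrightarrow> adm b a c \<and> adm a c b"
    using ufc_data unfolding ufc_data_def by (elim conjE) assumption
  then show "adm b a c" "adm a c b" "adm b c a" "adm c a b" "adm c b a"
    using assms by blast+
qed

lemma dim_pos: "a \<in> L \<Longrightarrow> d a > 0"
proof -
  have "\<forall>a\<in>L. d a > 0"
    using ufc_data unfolding ufc_data_def by (elim conjE) assumption
  then show "a \<in> L \<Longrightarrow> d a > 0" by blast
qed

lemma F_support: "F a b c e n m \<noteq> 0 \<Longrightarrow> adm b c n \<and> adm a n e \<and> adm a b m \<and> adm m c e"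
proof -
  have "\<forall>a b c e n m. F a b c e n m \<noteq> 0 \<longrightarrow> adm b c n \<and> adm a n e \<and> adm a b m \<and> adm m c e"
    using ufc_data unfolding ufc_data_def by (elim conjE) assumption
  then show "F a b c e n m \<noteq> 0 \<Longrightarrow> adm b c n \<and> adm a n e \<and> adm a b m \<and> adm m c e" by blast
qed

lemma F_unitary_rows:
  assumes "a \<in> L" "b \<in> L" "c \<in> L" "e \<in> L" "n \<in> L" "n' \<in> L"
    "adm b c n" "adm a n e" "adm b c n'" "adm a n' e"
  shows "(\<Sum>m\<in>L. F a b c e n m * cnj (F a b c e n' m)) = (if n = n' then 1 else 0)"
proof -
  have "\<forall>a\<in>L. \<forall>b\<in>L. \<forall>c\<in>L. \<forall>e\<in>L. \<forall>n\<in>L. \<forall>n'\<in>L.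
        adm b c n \<and> adm a n e \<and> adm b c n' \<and> adm a n' e \<longrightarrow>
        (\<Sum>m\<in>L. F a b c e n m * cnj (F a b c e n' m)) = (if n = n' then 1 else 0)"
    using ufc_data unfolding ufc_data_def by (elim conjE) assumption
  then show ?thesis using assms by blast
qed

lemma F_reflect:
  assumes "a \<in> L" "b \<in> L" "c \<in> L" "e \<in> L" "n \<in> L" "m \<in> L"
  shows "F e c b a n m = cnj (F a b c e n m)"
proof -
  have "\<forall>a\<in>L. \<forall>b\<in>L. \<forall>c\<in>L. \<forall>e\<in>L. \<forall>n\<in>L. \<forall>m\<in>L.
        F e c b a n m = cnj (F a b c e n m) \<and>
        F b a e c n m = cnj (F a b c e n m) \<and>
        F a m c n e b * complex_of_real (sqrt (d n * d m))
          = cnj (F a b c e n m) * complex_of_real (sqrt (d e * d b))"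
    using ufc_data unfolding ufc_data_def by (elim conjE) assumption
  then show ?thesis using assms by blast
qed

lemma finite_Hidx: "finite H"
proof -
  have "H \<subseteq> L \<times> L \<times> L \<times> L \<times> L" unfolding Hidx_def by auto
  then show ?thesis using finite_labels by (meson finite_SigmaI finite_subset)
qed

lemma finite_Vidx: "finite (V i)"
proof -
  have "V i \<subseteq> L \<times> L" unfolding Vidx_def by auto
  then show ?thesis using finite_labels by (meson finite_SigmaI finite_subset)
qed

lemma actV_apply:
  "actV L d adm i h y \<alpha> =
     (\<Sum>(a,b,l,c,e)\<in>H. if l = i \<and> \<alpha> = (a,b) then h (a,b,l,c,e) * y (c,e) / sqrt (d i) else 0)"
  unfolding actV_def
proof (intro sum.cong refl)
  fix \<iota> assume \<iota>: "\<iota> \<in> H"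
  obtain a b l c e where \<iota>_def: "\<iota> = (a,b,l,c,e)" by (metis prod.exhaust)
  have "l = i \<Longrightarrow> (c,e) \<in> V i"
    using \<iota> adm_perm(4) unfolding \<iota>_def by (auto simp: Hidx_def Vidx_def)
  then show "(\<Sum>\<gamma>\<in>V i. h \<iota> * rep d i \<iota> \<alpha> \<gamma> * y \<gamma>) =
      (case \<iota> of (a,b,l,c,e) \<Rightarrow> if l = i \<and> \<alpha> = (a,b) then h (a,b,l,c,e) * y (c,e) / sqrt (d i) else 0)"
    by (subst sum_eq_single[OF finite_Vidx, where w = "(c,e)"]) (auto simp: \<iota>_def rep_def)
qed

lemma actV_Vmod: "actV L d adm i h x \<in> Vmod L adm i"
  unfolding Vmod_def
proof (intro CollectI allI impI)
  fix \<alpha> assume "actV L d adm i h x \<alpha> \<noteq> 0"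
  then obtain \<iota> where "\<iota> \<in> H"
      "(case \<iota> of (a,b,l,c,e) \<Rightarrow> if l = i \<and> \<alpha> = (a,b) then h (a,b,l,c,e) * x (c,e) / sqrt (d i) else 0) \<noteq> 0"
    unfolding actV_apply by (rule sum.not_neutral_contains_not_neutral)
  then show "\<alpha> \<in> V i" by (auto simp: Hidx_def Vidx_def split: if_splits)
qed

lemma eta_apply:
  "eta L d adm (a,b,i,c,e) = (if (a,b,i,c,e) \<in> H \<and> c = a \<and> e = b then sqrt (d i) else 0)"
  by (auto simp: eta_def)

lemma actV_eta: assumes "x \<in> Vmod L adm i" shows "actV L d adm i (eta L d adm) x = x"
proof
  fix \<alpha> :: "'l \<times> 'l"
  obtain a b where \<alpha>: "\<alpha> = (a,b)" by (metis prod.exhaust)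
  have "actV L d adm i (eta L d adm) x \<alpha> = (\<Sum>\<iota>\<in>H. if \<iota> = (a,b,i,a,b) then x (a,b) else 0)"
    unfolding actV_apply
  proof (intro sum.cong refl)
    fix \<iota> assume \<iota>: "\<iota> \<in> H"
    obtain a' b' l c e where \<iota>_def: "\<iota> = (a',b',l,c,e)" by (metis prod.exhaust)
    have "d l > 0" using \<iota> dim_pos by (simp add: \<iota>_def Hidx_def)
    then show "(case \<iota> of (a',b',l,c,e) \<Rightarrow> if l = i \<and> \<alpha> = (a',b')
        then eta L d adm (a',b',l,c,e) * x (c,e) / sqrt (d i) else 0) =
      (if \<iota> = (a,b,i,a,b) then x (a,b) else 0)"
      using \<iota> by (auto simp: \<iota>_def \<alpha> eta_apply)
  qed
  also have "\<dots> = (if (a,b,i,a,b) \<in> H then x (a,b) else 0)"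
    using finite_Hidx by simp
  also have "\<dots> = x \<alpha>"
  proof (cases "\<alpha> \<in> V i")
    case True
    then have "(a,b,i,a,b) \<in> H" using adm_perm(3) adm_labels by (auto simp: \<alpha> Hidx_def Vidx_def)
    then show ?thesis by (simp add: \<alpha>)
  next
    case False
    then show ?thesis using assms by (auto simp: \<alpha> Vmod_def)
  qed
  finally show "actV L d adm i (eta L d adm) x \<alpha> = x \<alpha>" .
qed

lemma actV_cong: "(\<And>\<gamma>. \<gamma> \<in> V i \<Longrightarrow> y \<gamma> = y' \<gamma>) \<Longrightarrow> actV L d adm i h y = actV L d adm i h y'"
  unfolding actV_def by (intro ext sum.cong refl) auto

lemma phi_apply:
  "phi L adm F j k i x ((a,p),(p',b)) = (if p = p' then x (a,b) * F a j k b i p else 0)"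
proof -
  have "phi L adm F j k i x ((a,p),(p',b)) =
      (if (a,b) \<in> V i then x (a,b) * uvec F j k i a b ((a,p),(p',b)) else 0)"
    unfolding phi_def
    by (subst sum_eq_single[OF finite_Vidx, where w = "(a,b)"]) (auto simp: uvec_def split: if_splits)
  also have "\<dots> = (if p = p' then x (a,b) * F a j k b i p else 0)"
    using F_support[of a j k b i p] adm_labels by (auto simp: uvec_def Vidx_def)
  finally show ?thesis .
qed

lemma phi_restrict: "phi L adm F j k i (\<lambda>\<gamma>. if \<gamma> \<in> V i then x \<gamma> else 0) = phi L adm F j k i x"
proof
  fix z :: "('l \<times> 'l) \<times> ('l \<times> 'l)"
  obtain a p p' b where z: "z = ((a,p),(p',b))" by (metis prod.exhaust)
  have "F a j k b i p \<noteq> 0 \<Longrightarrow> (a,b) \<in> V i"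
    using F_support[of a j k b i p] adm_labels by (auto simp: Vidx_def)
  then show "phi L adm F j k i (\<lambda>\<gamma>. if \<gamma> \<in> V i then x \<gamma> else 0) z = phi L adm F j k i x z"
    unfolding z phi_apply by auto
qed

end

locale ufc_pair = ufc L u d adm F for L :: "'l set" and u d adm F +
  fixes j k :: 'l
  assumes j_label: "j \<in> L" and k_label: "k \<in> L"
begin

definition channels :: "'l set" where
  "channels = {i \<in> L. adm i j k}"

definition ucoord :: "'l \<Rightarrow> 'l \<Rightarrow> 'l \<Rightarrow> (('l \<times> 'l) \<times> ('l \<times> 'l) \<Rightarrow> complex) \<Rightarrow> complex" where
  "ucoord i c e t = (\<Sum>q\<in>L. F e k j c i q * t ((c,q),(q,e)))"

definition Psi :: "('l \<Rightarrow> 'l \<times> 'l \<Rightarrow> complex) \<Rightarrow> ('l \<times> 'l) \<times> ('l \<times> 'l) \<Rightarrow> complex" where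
  "Psi f = (\<lambda>z. \<Sum>i\<in>channels. phi L adm F j k i (f i) z)"

lemma finite_channels: "finite channels"
  unfolding channels_def using finite_labels by simp

lemma Psi_apply:
  "Psi f ((a,p),(p',b)) = (if p = p' then (\<Sum>i\<in>channels. f i (a,b) * F a j k b i p) else 0)"
  unfolding Psi_def phi_apply by simp

lemma Psi_cong: "(\<And>i. i \<in> channels \<Longrightarrow> f i = g i) \<Longrightarrow> Psi f = Psi g"
  unfolding Psi_def by (intro ext sum.cong refl) auto

lemma Psi_add: "Psi (\<lambda>i z. f i z + g i z) = (\<lambda>z. Psi f z + Psi g z)"
proof
  fix z :: "('l \<times> 'l) \<times> ('l \<times> 'l)"
  obtain a p p' b where z: "z = ((a,p),(p',b))" by (metis prod.exhaust)
  show "Psi (\<lambda>i z. f i z + g i z) z = Psi f z + Psi g z"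
    unfolding z Psi_apply by (simp add: sum.distrib ring_distribs)
qed

lemma Psi_scale: "Psi (\<lambda>i z. c * f i z) = (\<lambda>z. c * Psi f z)"
proof
  fix z :: "('l \<times> 'l) \<times> ('l \<times> 'l)"
  obtain a p p' b where z: "z = ((a,p),(p',b))" by (metis prod.exhaust)
  show "Psi (\<lambda>i z. c * f i z) z = c * Psi f z"
    unfolding z Psi_apply by (simp add: sum_distrib_left mult_ac)
qed

lemma Psi_TCmod: "Psi f \<in> TCmod L adm j k"
  unfolding TCmod_def
proof (intro CollectI allI impI)
  fix z :: "('l \<times> 'l) \<times> ('l \<times> 'l)"
  obtain a p p' b where z: "z = ((a,p),(p',b))" by (metis prod.exhaust)
  assume "Psi f z \<noteq> 0"
  then have "p' = p" "(\<Sum>i\<in>channels. f i (a,b) * F a j k b i p) \<noteq> 0"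
    unfolding z Psi_apply by (auto split: if_splits)
  moreover obtain i where "f i (a,b) * F a j k b i p \<noteq> 0"
    using calculation(2) by (rule sum.not_neutral_contains_not_neutral)
  then have "adm a j p" "adm p k b" using F_support by auto
  ultimately show "z \<in> V j \<times> V k" unfolding z using adm_labels by (auto simp: Vidx_def)
qed

lemma F_channels_orthonormal:
  assumes "i \<in> channels" "i' \<in> channels" "(c,e) \<in> V i"
  shows "(\<Sum>q\<in>L. F c j k e i' q * cnj (F c j k e i q)) = (if i' = i then 1 else 0)"
proof -
  have ce: "c \<in> L" "e \<in> L" "adm c i e" using assms(3) by (auto simp: Vidx_def)
  have i: "i \<in> L" "adm j k i" "i' \<in> L" "adm j k i'"
    using assms(1,2) adm_perm(3) by (auto simp: channels_def)
  show ?thesis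
  proof (cases "adm c i' e")
    case True
    then show ?thesis using F_unitary_rows[of c j k e i' i] ce i j_label k_label by auto
  next
    case False
    then have "\<And>q. F c j k e i' q = 0" using F_support by blast
    moreover have "i' \<noteq> i" using False ce by auto
    ultimately show ?thesis by simp
  qed
qed

lemma ucoord_Psi:
  assumes "i \<in> channels" "(c,e) \<in> V i"
  shows "ucoord i c e (Psi f) = f i (c,e)"
proof -
  have ce: "c \<in> L" "e \<in> L" using assms(2) by (auto simp: Vidx_def)
  have i: "i \<in> L" using assms(1) by (auto simp: channels_def)
  have "ucoord i c e (Psi f) = (\<Sum>q\<in>L. F e k j c i q * (\<Sum>i'\<in>channels. f i' (c,e) * F c j k e i' q))"
    unfolding ucoord_def Psi_apply by simp
  also have "\<dots> = (\<Sum>q\<in>L. \<Sum>i'\<in>channels. f i' (c,e) * (F c j k e i' q * cnj (F c j k e i q)))"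
    by (intro sum.cong refl)
      (simp add: sum_distrib_left F_reflect[OF ce(1) j_label k_label ce(2) i] mult_ac)
  also have "\<dots> = (\<Sum>i'\<in>channels. f i' (c,e) * (\<Sum>q\<in>L. F c j k e i' q * cnj (F c j k e i q)))"
    by (simp add: sum.swap[of _ L] sum_distrib_left)
  also have "\<dots> = (\<Sum>i'\<in>channels. if i' = i then f i (c,e) else 0)"
    by (intro sum.cong refl) (simp add: F_channels_orthonormal[OF assms(1) _ assms(2)])
  also have "\<dots> = f i (c,e)" using assms(1) finite_channels by simp
  finally show ?thesis .
qed

lemma dsum_carrier_vanishes:
  assumes "f \<in> dsum_carrier L adm j k" "\<not> (i \<in> channels \<and> \<gamma> \<in> V i)"
  shows "f i \<gamma> = 0"
proof (cases "i \<in> channels")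
  case True
  then have "f i \<in> Vmod L adm i" "\<gamma> \<notin> V i"
    using assms unfolding dsum_carrier_def channels_def by auto
  then show ?thesis unfolding Vmod_def by blast
next
  case False
  then have "f i = (\<lambda>_. 0)" using assms(1) unfolding dsum_carrier_def channels_def by auto
  then show ?thesis by simp
qed

lemma inj_on_Psi: "inj_on Psi (dsum_carrier L adm j k)"
proof (rule inj_onI)
  fix f g assume f: "f \<in> dsum_carrier L adm j k" and g: "g \<in> dsum_carrier L adm j k"
    and eq: "Psi f = Psi g"
  show "f = g"
  proof (intro ext)
    fix i and \<gamma> :: "'l \<times> 'l"
    obtain c e where \<gamma>: "\<gamma> = (c,e)" by (metis prod.exhaust)
    show "f i \<gamma> = g i \<gamma>"
    proof (cases "i \<in> channels \<and> \<gamma> \<in> V i")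
      case True
      then show ?thesis using ucoord_Psi[of i c e f] ucoord_Psi[of i c e g] eq \<gamma> by simp
    next
      case False
      then show ?thesis using dsum_carrier_vanishes[OF f False] dsum_carrier_vanishes[OF g False] by simp
    qed
  qed
qed

lemma actT_Delta_basis_reindex:
  "actT L d adm j k (Delta_basis L d adm F (a,b,l,c,e)) t ((z1,z2),(z3,z4)) =
   (\<Sum>q\<in>L. Delta_basis L d adm F (a,b,l,c,e) ((z1,z2,j,c,q),(z3,z4,k,q,e))
      * rep d j (z1,z2,j,c,q) (z1,z2) (c,q) * rep d k (z3,z4,k,q,e) (z3,z4) (q,e) * t ((c,q),(q,e)))"
proof -
  define g where "g = (\<lambda>((\<iota>,\<kappa>),(\<gamma>,\<delta>)). Delta_basis L d adm F (a,b,l,c,e) (\<iota>,\<kappa>)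
      * rep d j \<iota> (z1,z2) \<gamma> * rep d k \<kappa> (z3,z4) \<delta> * t (\<gamma>,\<delta>))"
  define m :: "'l \<Rightarrow> _" where "m = (\<lambda>q. (((z1,z2,j,c,q),(z3,z4,k,q,e)),((c,q),(q,e))))"
  have "actT L d adm j k (Delta_basis L d adm F (a,b,l,c,e)) t ((z1,z2),(z3,z4)) =
      sum g ((H \<times> H) \<times> (V j \<times> V k))"
    unfolding actT_def g_def by (simp add: sum.cartesian_product case_prod_unfold)
  also have "\<dots> = (\<Sum>q\<in>L. g (m q))"
  proof (rule sum_reindex_nonzero)
    show "finite ((H \<times> H) \<times> (V j \<times> V k))" using finite_Hidx finite_Vidx by simp
    show "finite L" by (rule finite_labels)
    show "inj_on m L" unfolding m_def by (rule inj_onI) simp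
  next
    fix w assume w: "w \<in> (H \<times> H) \<times> (V j \<times> V k)" and nz: "g w \<noteq> 0"
    obtain a1 p1 j1 c1 q1 p2 b2 k2 q2 e2 \<gamma> \<delta>
      where w_def: "w = (((a1,p1,j1,c1,q1),(p2,b2,k2,q2,e2)),(\<gamma>,\<delta>))"
      by (metis prod.exhaust)
    from nz show "w \<in> m ` L"
      using w unfolding w_def g_def m_def
      by (auto simp: Delta_basis_def rep_def Hidx_def split: if_splits)
  next
    fix q assume "q \<in> L" and nz: "g (m q) \<noteq> 0"
    then have "z1 = a" "z4 = b" "z2 = z3" and
      F1: "F a j k b l z2 \<noteq> 0" and F2: "F e k j c l q \<noteq> 0"
      unfolding g_def m_def by (auto simp: Delta_basis_def rep_def split: if_splits)
    moreover from F_support[OF F1] have "adm a j z2" "adm z2 k b" by auto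
    moreover from F_support[OF F2] have qjc: "adm q j c" and ekq: "adm e k q" by auto
    moreover note adm_perm(1,5)[OF qjc] adm_perm(1,5)[OF ekq]
    ultimately show "m q \<in> (H \<times> H) \<times> (V j \<times> V k)"
      unfolding m_def using adm_labels by (auto simp: Hidx_def Vidx_def)
  qed
  finally show ?thesis by (simp add: g_def m_def)
qed

lemma actT_Delta_basis:
  "actT L d adm j k (Delta_basis L d adm F (a,b,l,c,e)) t ((z1,z2),(z3,z4)) =
   (if z1 = a \<and> z4 = b \<and> z2 = z3 \<and> l \<in> channels
    then F a j k b l z2 * ucoord l c e t / sqrt (d l) else 0)"
proof (cases "z1 = a \<and> z4 = b \<and> z2 = z3 \<and> l \<in> channels")
  case True
  have "sqrt (d j) > 0" "sqrt (d k) > 0" using dim_pos j_label k_label by auto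
  then have coeff: "complex_of_real (sqrt (d j * d k) / sqrt (d l)) * (1 / complex_of_real (sqrt (d j)))
      * (1 / complex_of_real (sqrt (d k))) = 1 / sqrt (d l)"
    by (simp add: real_sqrt_mult field_simps)
  have "actT L d adm j k (Delta_basis L d adm F (a,b,l,c,e)) t ((z1,z2),(z3,z4)) =
    (\<Sum>q\<in>L. (complex_of_real (sqrt (d j * d k) / sqrt (d l)) * (1 / complex_of_real (sqrt (d j)))
      * (1 / complex_of_real (sqrt (d k)))) * F a j k b l z2 * (F e k j c l q * t ((c,q),(q,e))))"
    unfolding actT_Delta_basis_reindex using True j_label k_label
    by (intro sum.cong refl) (simp add: Delta_basis_def rep_def channels_def mult_ac)
  also have "\<dots> = F a j k b l z2 * ucoord l c e t / sqrt (d l)"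
    unfolding coeff ucoord_def by (simp add: sum_distrib_left sum_divide_distrib)
  finally show ?thesis using True by simp
next
  case False
  then show ?thesis
    unfolding actT_Delta_basis_reindex
    by (auto simp: Delta_basis_def rep_def channels_def dest!: F_support dest: adm_labels intro!: sum.neutral)
qed

lemma tens_act_apply:
  "tens_act L d adm F j k h t ((a0,p),(p',b0)) =
   (if p = p' then (\<Sum>(a,b,l,c,e)\<in>H. if l \<in> channels \<and> a0 = a \<and> b0 = b
      then h (a,b,l,c,e) * F a j k b l p * ucoord l c e t / sqrt (d l) else 0) else 0)"
  unfolding tens_act_def actT_Delta
  by (auto simp: actT_Delta_basis split: prod.splits intro!: sum.cong sum.neutral)

lemma Psi_actV_apply:
  "Psi (\<lambda>i. actV L d adm i h (y i)) ((a0,p),(p',b0)) =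
   (if p = p' then (\<Sum>(a,b,l,c,e)\<in>H. if l \<in> channels \<and> a0 = a \<and> b0 = b
      then h (a,b,l,c,e) * F a j k b l p * y l (c,e) / sqrt (d l) else 0) else 0)"
proof -
  have "(\<Sum>i\<in>channels. actV L d adm i h (y i) (a0,b0) * F a0 j k b0 i p) =
      (\<Sum>i\<in>channels. \<Sum>(a,b,l,c,e)\<in>H. if l = i \<and> a0 = a \<and> b0 = b
         then h (a,b,l,c,e) * F a j k b l p * y l (c,e) / sqrt (d l) else 0)"
    unfolding actV_apply sum_distrib_right
    by (auto intro!: sum.cong split: prod.splits)
  also have "\<dots> = (\<Sum>(a,b,l,c,e)\<in>H. \<Sum>i\<in>channels. if l = i \<and> a0 = a \<and> b0 = b
         then h (a,b,l,c,e) * F a j k b l p * y l (c,e) / sqrt (d l) else 0)"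
    by (simp only: sum.swap[where A = channels] case_prod_unfold)
  also have "\<dots> = (\<Sum>(a,b,l,c,e)\<in>H. if l \<in> channels \<and> a0 = a \<and> b0 = b
         then h (a,b,l,c,e) * F a j k b l p * y l (c,e) / sqrt (d l) else 0)"
    using finite_channels by (intro sum.cong refl) (auto simp: if_distrib cong: if_cong intro!: sum.neutral)
  finally show ?thesis unfolding Psi_apply by (cases "p = p'") simp_all
qed

lemma tens_act_eq_Psi: "tens_act L d adm F j k h t = Psi (\<lambda>i. actV L d adm i h (\<lambda>(c,e). ucoord i c e t))"
proof
  fix z :: "('l \<times> 'l) \<times> ('l \<times> 'l)"
  obtain a0 p p' b0 where z: "z = ((a0,p),(p',b0))" by (metis prod.exhaust)
  show "tens_act L d adm F j k h t z = Psi (\<lambda>i. actV L d adm i h (\<lambda>(c,e). ucoord i c e t)) z"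
    unfolding z tens_act_apply Psi_actV_apply by (simp cong: if_cong)
qed

lemma tens_act_Psi: "tens_act L d adm F j k h (Psi f) = Psi (\<lambda>i. actV L d adm i h (f i))"
  unfolding tens_act_eq_Psi
  by (intro Psi_cong actV_cong) (auto simp: ucoord_Psi)

lemma tens_carrier_eq_image_Psi: "tens_carrier L d adm F j k = Psi ` dsum_carrier L adm j k"
proof
  show "tens_carrier L d adm F j k \<subseteq> Psi ` dsum_carrier L adm j k"
  proof
    fix s assume "s \<in> tens_carrier L d adm F j k"
    then obtain t where s: "s = tens_act L d adm F j k (eta L d adm) t"
      unfolding tens_carrier_def tens_act_def by auto
    define f where "f = (\<lambda>i. if i \<in> channels
      then actV L d adm i (eta L d adm) (\<lambda>(c,e). ucoord i c e t) else (\<lambda>_. 0))"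
    have "f \<in> dsum_carrier L adm j k"
      unfolding f_def dsum_carrier_def channels_def using actV_Vmod by auto
    moreover have "s = Psi f" unfolding s tens_act_eq_Psi by (rule Psi_cong) (simp add: f_def)
    ultimately show "s \<in> Psi ` dsum_carrier L adm j k" by blast
  qed
next
  show "Psi ` dsum_carrier L adm j k \<subseteq> tens_carrier L d adm F j k"
  proof
    fix s assume "s \<in> Psi ` dsum_carrier L adm j k"
    then obtain f where f: "f \<in> dsum_carrier L adm j k" and s: "s = Psi f" by auto
    have "tens_act L d adm F j k (eta L d adm) s = Psi (\<lambda>i. actV L d adm i (eta L d adm) (f i))"
      unfolding s by (rule tens_act_Psi)
    also have "\<dots> = s"
      unfolding s using f by (intro Psi_cong actV_eta) (auto simp: dsum_carrier_def channels_def)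
    finally have "s = actT L d adm j k (Delta L d adm F (eta L d adm)) s"
      unfolding tens_act_def by simp
    moreover have "s \<in> TCmod L adm j k" unfolding s by (rule Psi_TCmod)
    ultimately show "s \<in> tens_carrier L d adm F j k" unfolding tens_carrier_def by (rule image_eqI)
  qed
qed

lemma bij_betw_Psi: "bij_betw Psi (dsum_carrier L adm j k) (tens_carrier L d adm F j k)"
  unfolding bij_betw_def using inj_on_Psi tens_carrier_eq_image_Psi by simp

lemma Psi_dsum_single:
  assumes "i \<in> channels"
  shows "Psi (dsum_single i x) = phi L adm F j k i x"
proof
  fix z :: "('l \<times> 'l) \<times> ('l \<times> 'l)"
  obtain a p p' b where z: "z = ((a,p),(p',b))" by (metis prod.exhaust)
  have "(\<Sum>i'\<in>channels. dsum_single i x i' (a,b) * F a j k b i' p) =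
      (\<Sum>i'\<in>channels. if i' = i then x (a,b) * F a j k b i p else 0)"
    by (intro sum.cong refl) (simp add: dsum_single_def)
  then show "Psi (dsum_single i x) z = phi L adm F j k i x z"
    unfolding z Psi_apply phi_apply using assms finite_channels by (cases "p = p'") simp_all
qed

lemma dsum_single_in_dsum_carrier:
  "i \<in> channels \<Longrightarrow> x \<in> Vmod L adm i \<Longrightarrow> dsum_single i x \<in> dsum_carrier L adm j k"
  unfolding dsum_single_def dsum_carrier_def channels_def by (auto simp: Vmod_def)

lemma phi_equivariant:
  assumes "i \<in> channels"
  shows "phi L adm F j k i (actV L d adm i h x) = tens_act L d adm F j k h (phi L adm F j k i x)"
proof -
  have "tens_act L d adm F j k h (phi L adm F j k i x) =
      Psi (\<lambda>i'. actV L d adm i' h (dsum_single i x i'))"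
    by (simp add: Psi_dsum_single[OF assms, symmetric] tens_act_Psi)
  also have "(\<lambda>i'. actV L d adm i' h (dsum_single i x i')) = dsum_single i (actV L d adm i h x)"
    by (auto simp: dsum_single_def actV_def)
  finally show ?thesis by (simp add: Psi_dsum_single[OF assms])
qed

lemma bij_betw_phi:
  assumes "i \<in> channels"
  shows "bij_betw (phi L adm F j k i) (Vmod L adm i) (Wspan L adm F j k i)"
  unfolding bij_betw_def
proof
  show "inj_on (phi L adm F j k i) (Vmod L adm i)"
  proof (rule inj_onI)
    fix x y assume x: "x \<in> Vmod L adm i" and y: "y \<in> Vmod L adm i"
      and "phi L adm F j k i x = phi L adm F j k i y"
    then have "Psi (dsum_single i x) = Psi (dsum_single i y)"
      by (simp add: Psi_dsum_single assms)
    then have "dsum_single i x = dsum_single i y"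
      using inj_on_Psi dsum_single_in_dsum_carrier[OF assms] x y by (meson inj_onD)
    then show "x = y" by (metis dsum_single_def)
  qed
  have "phi L adm F j k i c \<in> phi L adm F j k i ` Vmod L adm i" for c
    using phi_restrict[where x = c, symmetric] by (auto simp: Vmod_def)
  then show "phi L adm F j k i ` Vmod L adm i = Wspan L adm F j k i"
    unfolding Wspan_eq_range_phi by auto
qed

lemma Wspan_subset_tens_carrier:
  assumes "i \<in> channels"
  shows "Wspan L adm F j k i \<subseteq> tens_carrier L d adm F j k"
  using bij_betw_phi[OF assms] dsum_single_in_dsum_carrier[OF assms]
  unfolding tens_carrier_eq_image_Psi bij_betw_def Psi_dsum_single[OF assms, symmetric]
  by blast

lemma Wspan_tens_act_closed:
  assumes "i \<in> channels" "w \<in> Wspan L adm F j k i"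
  shows "tens_act L d adm F j k h w \<in> Wspan L adm F j k i"
  using assms(2) unfolding Wspan_eq_range_phi by (auto simp: phi_equivariant[OF assms(1), symmetric])

end

theorem mainTheorem9:
  fixes L :: "'l set" and u :: 'l and d :: "'l \<Rightarrow> real"
    and adm :: "'l \<Rightarrow> 'l \<Rightarrow> 'l \<Rightarrow> bool"
    and F :: "'l \<Rightarrow> 'l \<Rightarrow> 'l \<Rightarrow> 'l \<Rightarrow> 'l \<Rightarrow> 'l \<Rightarrow> complex"
    and j k :: 'l
  assumes "ufc_data L u d adm F" and "j \<in> L" and "k \<in> L"
  shows "(\<forall>i\<in>L. adm i j k \<longrightarrow>
            Wspan L adm F j k i \<subseteq> tens_carrier L d adm F j k \<and>
            (\<forall>h. \<forall>w\<in>Wspan L adm F j k i. tens_act L d adm F j k h w \<in> Wspan L adm F j k i) \<and>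
            bij_betw (phi L adm F j k i) (Vmod L adm i) (Wspan L adm F j k i) \<and>
            (\<forall>h. \<forall>x\<in>Vmod L adm i.
               phi L adm F j k i (actV L d adm i h x) = tens_act L d adm F j k h (phi L adm F j k i x)))
       \<and> (\<exists>\<Psi>. bij_betw \<Psi> (dsum_carrier L adm j k) (tens_carrier L d adm F j k) \<and>
            (\<forall>f\<in>dsum_carrier L adm j k. \<forall>g\<in>dsum_carrier L adm j k.
               \<Psi> (\<lambda>i z. f i z + g i z) = (\<lambda>z. \<Psi> f z + \<Psi> g z)) \<and>
            (\<forall>c. \<forall>f\<in>dsum_carrier L adm j k. \<Psi> (\<lambda>i z. c * f i z) = (\<lambda>z. c * \<Psi> f z)) \<and>
            (\<forall>h. \<forall>f\<in>dsum_carrier L adm j k.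
               \<Psi> (ds_act L d adm h f) = tens_act L d adm F j k h (\<Psi> f)))"
proof -
  interpret ufc_pair L u d adm F j k
    using assms by unfold_locales
  have channel: "i \<in> channels" if "i \<in> L" "adm i j k" for i
    using that by (simp add: channels_def)
  have "\<forall>i\<in>L. adm i j k \<longrightarrow>
            Wspan L adm F j k i \<subseteq> tens_carrier L d adm F j k \<and>
            (\<forall>h. \<forall>w\<in>Wspan L adm F j k i. tens_act L d adm F j k h w \<in> Wspan L adm F j k i) \<and>
            bij_betw (phi L adm F j k i) (Vmod L adm i) (Wspan L adm F j k i) \<and>
            (\<forall>h. \<forall>x\<in>Vmod L adm i.
               phi L adm F j k i (actV L d adm i h x) = tens_act L d adm F j k h (phi L adm F j k i x))"
    using Wspan_subset_tens_carrier Wspan_tens_act_closed bij_betw_phi phi_equivariant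
    by (simp add: channel)
  moreover have "bij_betw Psi (dsum_carrier L adm j k) (tens_carrier L d adm F j k) \<and>
            (\<forall>f g. Psi (\<lambda>i z. f i z + g i z) = (\<lambda>z. Psi f z + Psi g z)) \<and>
            (\<forall>c f. Psi (\<lambda>i z. c * f i z) = (\<lambda>z. c * Psi f z)) \<and>
            (\<forall>h f. Psi (ds_act L d adm h f) = tens_act L d adm F j k h (Psi f))"
    using bij_betw_Psi Psi_add Psi_scale tens_act_Psi by (simp add: ds_act_def)
  ultimately show ?thesis by blast
qed

end
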